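(* Let $M=\mathbb{R}\times\mathbb{C}\subset\mathbb{C}^2$. Then every $C^2$-smooth totally real disc contained in $M$ is polynomially convex.
   Context: For a compact $K\subset\mathbb{C}^n$, $\widehat{K}:=\{z\in\mathbb{C}^n : |p(z)|\le \sup_K|p| \text{ for all holomorphic polynomials } p\}$, and $K$ is polynomially convex if $\widehat{K}=K$. A submanifold $N\subset\mathbb{C}^n$ is totally real if $T_pN\cap iT_pN=\{0\}$ for all $p\in N$. A $C^2$-smooth totally real disc is a compact subset of a $C^2$-smooth totally real submanifold of $\mathbb{C}^2$ which is $C^2$-diffeomorphic to the closed unit disc in the plane. *)

theory Defs
  imports "HOL-Analysis.Analysis"
begin

text \<open>C^2 = complex \<times> complex, viewed as the real Euclidean space R^4.\<close>

definition cmul_i :: "complex \<times> complex \<Rightarrow> complex \<times> complex" where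
  "cmul_i v = (\<i> * fst v, \<i> * snd v)"

text \<open>f is C^2-smooth on S: f is C^2 (twice Frechet differentiable with continuous
  second derivative) on some open neighbourhood of S.  For open S this is ordinary C^2.\<close>
definition C2_on :: "'a::euclidean_space set \<Rightarrow> ('a \<Rightarrow> 'b::euclidean_space) \<Rightarrow> bool" where
  "C2_on S f \<longleftrightarrow> (\<exists>V Df D2f. open V \<and> S \<subseteq> V \<and>
      (\<forall>x\<in>V. (f has_derivative blinfun_apply (Df x)) (at x) \<and>
               (Df has_derivative blinfun_apply (D2f x)) (at x)) \<and>
      continuous_on V D2f)"

text \<open>N is an (embedded) C^2 totally real submanifold of C^2, of the real dimension
  DIM('a): locally N is the image of a C^2 embedding (homeomorphism onto an open
  piece of N with injective differential) of an open subset of 'a, and every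
  tangent space T satisfies T \<inter> iT = {0}.\<close>
definition totally_real_submanifold ::
    "'a::euclidean_space itself \<Rightarrow> (complex \<times> complex) set \<Rightarrow> bool" where
  "totally_real_submanifold _ N \<longleftrightarrow>
     (\<forall>p\<in>N. \<exists>(U::'a set) W \<phi>. open U \<and> open W \<and> p \<in> W \<and> C2_on U \<phi> \<and>
        inj_on \<phi> U \<and> \<phi> ` U = N \<inter> W \<and> continuous_on (N \<inter> W) (inv_into U \<phi>) \<and>
        (\<forall>x\<in>U. \<exists>L. (\<phi> has_derivative L) (at x) \<and> inj L \<and>
              (\<forall>v w. L v = cmul_i (L w) \<longrightarrow> L v = 0)))"

definition C2_diffeomorphic ::
    "'a::euclidean_space set \<Rightarrow> 'b::euclidean_space set \<Rightarrow> bool" where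
  "C2_diffeomorphic A B \<longleftrightarrow>
     (\<exists>h g. homeomorphism A B h g \<and> C2_on A h \<and> C2_on B g)"

text \<open>A C^2-smooth totally real disc in C^2.  The closed unit disc in the plane is
  cball 0 1 in complex (= R^2).\<close>
definition totally_real_disc :: "'a::euclidean_space itself \<Rightarrow> (complex \<times> complex) set \<Rightarrow> bool" where
  "totally_real_disc T D \<longleftrightarrow>
     (\<exists>N. totally_real_submanifold T N \<and> D \<subseteq> N \<and> compact D \<and>
          C2_diffeomorphic (cball (0::complex) 1) D)"

definition hol_poly2 :: "(complex \<times> complex \<Rightarrow> complex) \<Rightarrow> bool" where
  "hol_poly2 p \<longleftrightarrow> (\<exists>n (c :: nat \<Rightarrow> nat \<Rightarrow> complex).
      p = (\<lambda>(z, w). \<Sum>i<n. \<Sum>j<n. c i j * z ^ i * w ^ j))"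

definition poly_hull :: "(complex \<times> complex) set \<Rightarrow> (complex \<times> complex) set" where
  "poly_hull K = {z. \<forall>p. hol_poly2 p \<longrightarrow> norm (p z) \<le> (SUP y\<in>K. norm (p y))}"

definition polynomially_convex :: "(complex \<times> complex) set \<Rightarrow> bool" where
  "polynomially_convex K \<longleftrightarrow> poly_hull K = K"

definition M_RC :: "(complex \<times> complex) set" where
  "M_RC = {(z, w). z \<in> \<real>}"

end

theory Submission
  imports Defs "HOL-Computational_Algebra.Polynomial"
begin

text \<open>A point \<open>(a, w)\<close> with \<open>a\<close> not real is separated from \<open>D\<close> by the parabola
  \<open>1 - (z - Re a)\<^sup>2 / R\<^sup>2\<close> (\<open>bump_poly\<close>), which has modulus at most \<open>1\<close> on the real
  first coordinates of \<open>D\<close> but modulus greater than \<open>1\<close> at \<open>a\<close>. For \<open>a = x0\<close> real, if the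
  fibre \<open>K = {w. (x0, w) \<in> D}\<close> has connected complement, then by Runge's theorem a polynomial
  \<open>q\<close> with \<open>q w = 1\<close> is smaller than \<open>1/2\<close> on \<open>K\<close>, and a high power of the parabola centred
  at \<open>x0\<close> damps \<open>q\<close> on the part of \<open>D\<close> where \<open>|q| \<ge> 1/2\<close>, which stays away from the fibre.

  The fibre is homeomorphic to the level set \<open>{u = x0}\<close> of \<open>u = Re z\<^sub>1\<close> on the parametrising
  disc. Since \<open>D\<close> is totally real and \<open>z\<^sub>1\<close> is real on \<open>D\<close>, \<open>u\<close> has no critical point in
  the open disc: otherwise the tangent plane would be the complex line \<open>{0} \<times> \<complex>\<close>. Hence
  \<open>u\<close> has no interior extrema, no component of the complement of a level set is bounded, and
  by Borsuk's separation theorem the complement of the fibre is connected as well.\<close>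

section \<open>Uniform polynomial approximation on compact subsets of the plane\<close>

definition poly_approximable :: "complex set \<Rightarrow> (complex \<Rightarrow> complex) \<Rightarrow> bool" where
  "poly_approximable K f \<longleftrightarrow> (\<forall>e>0. \<exists>q. \<forall>w\<in>K. norm (poly q w - f w) < e)"

lemma poly_approximable_poly: "poly_approximable K (poly q)"
  unfolding poly_approximable_def by (auto intro!: exI[of _ q])

lemma poly_approximable_const: "poly_approximable K (\<lambda>w. c)"
proof -
  have "poly [:c:] = (\<lambda>w. c)" by (simp add: fun_eq_iff)
  then show ?thesis using poly_approximable_poly[of K "[:c:]"] by simp
qed

lemma poly_approximable_ident: "poly_approximable K (\<lambda>w. w)"
proof -
  have "poly [:0, 1:] = (\<lambda>w::complex. w)" by (simp add: fun_eq_iff)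
  then show ?thesis using poly_approximable_poly[of K "[:0, 1:]"] by simp
qed

lemma poly_approximable_cong:
  assumes "poly_approximable K f" "\<And>w. w \<in> K \<Longrightarrow> f w = g w"
  shows "poly_approximable K g"
  using assms unfolding poly_approximable_def by simp

lemma poly_approximable_limit:
  assumes "\<And>e. e > 0 \<Longrightarrow> \<exists>g. poly_approximable K g \<and> (\<forall>w\<in>K. norm (g w - f w) \<le> e)"
  shows "poly_approximable K f"
  unfolding poly_approximable_def
proof (intro allI impI)
  fix e :: real assume "e > 0"
  then obtain g where g: "poly_approximable K g" "\<forall>w\<in>K. norm (g w - f w) \<le> e/4"
    using assms[of "e/4"] by auto
  then obtain q where q: "\<forall>w\<in>K. norm (poly q w - g w) < e/2"
    using \<open>e > 0\<close> unfolding poly_approximable_def by (meson half_gt_zero)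
  have "norm (poly q w - f w) < e" if "w \<in> K" for w
    using norm_diff_triangle_less[of "poly q w" "g w" "e/2" "f w" "e/2"] q g that \<open>e > 0\<close> by force
  then show "\<exists>q. \<forall>w\<in>K. norm (poly q w - f w) < e" by blast
qed

lemma poly_approximable_add:
  assumes "poly_approximable K f" "poly_approximable K g"
  shows "poly_approximable K (\<lambda>w. f w + g w)"
  unfolding poly_approximable_def
proof (intro allI impI)
  fix e :: real assume "e > 0"
  then obtain q1 q2 where q1: "\<forall>w\<in>K. norm (poly q1 w - f w) < e/2"
    and q2: "\<forall>w\<in>K. norm (poly q2 w - g w) < e/2"
    using assms unfolding poly_approximable_def by (meson half_gt_zero)
  have "norm (poly (q1 + q2) w - (f w + g w)) < e" if "w \<in> K" for w
  proof -
    have "norm (poly (q1 + q2) w - (f w + g w)) \<le> norm (poly q1 w - f w) + norm (poly q2 w - g w)"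
      by (metis add_diff_add norm_triangle_ineq poly_add)
    then show ?thesis using q1 q2 that by force
  qed
  then show "\<exists>q. \<forall>w\<in>K. norm (poly q w - (f w + g w)) < e" by blast
qed

lemma poly_approximable_bounded:
  assumes "compact K" "poly_approximable K f"
  obtains B where "\<forall>w\<in>K. norm (f w) \<le> B"
proof -
  obtain q where q: "\<forall>w\<in>K. norm (poly q w - f w) < 1"
    using assms(2) unfolding poly_approximable_def by (meson zero_less_one)
  have "compact (poly q ` K)"
    using assms(1) by (intro compact_continuous_image continuous_intros)
  then obtain B where B: "\<forall>w\<in>K. norm (poly q w) \<le> B"
    by (meson bounded_iff compact_imp_bounded imageI)
  have "norm (f w) \<le> B + 1" if "w \<in> K" for w
    using norm_triangle_sub[of "f w" "poly q w"] q B that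
    by (smt (verit) norm_minus_commute)
  then show ?thesis using that by blast
qed

lemma poly_approximable_mult:
  assumes K: "compact K" and f: "poly_approximable K f" and g: "poly_approximable K g"
  shows "poly_approximable K (\<lambda>w. f w * g w)"
proof (rule poly_approximable_limit)
  fix e :: real assume "e > 0"
  obtain Bf where Bf: "\<forall>w\<in>K. norm (f w) \<le> Bf"
    using poly_approximable_bounded[OF K f] by blast
  obtain Bg where Bg: "\<forall>w\<in>K. norm (g w) \<le> Bg"
    using poly_approximable_bounded[OF K g] by blast
  define C where "C = \<bar>Bf\<bar> + \<bar>Bg\<bar> + 1"
  define \<eta> where "\<eta> = min 1 (e / C)"
  have "C > 0" "\<eta> > 0" using \<open>e > 0\<close> by (auto simp: C_def \<eta>_def)
  obtain q1 where q1: "\<forall>w\<in>K. norm (poly q1 w - f w) < \<eta>"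
    using f \<open>\<eta> > 0\<close> unfolding poly_approximable_def by blast
  obtain q2 where q2: "\<forall>w\<in>K. norm (poly q2 w - g w) < \<eta>"
    using g \<open>\<eta> > 0\<close> unfolding poly_approximable_def by blast
  have "norm (poly (q1 * q2) w - f w * g w) \<le> e" if w: "w \<in> K" for w
  proof -
    have "norm (poly q1 w) \<le> \<bar>Bf\<bar> + 1"
      using norm_triangle_sub[of "poly q1 w" "f w"] q1 Bf w \<eta>_def by force
    then have 1: "norm (poly q1 w * (poly q2 w - g w)) \<le> (\<bar>Bf\<bar> + 1) * \<eta>"
      using q2 w unfolding norm_mult by (intro mult_mono) (auto intro: less_imp_le)
    have 2: "norm ((poly q1 w - f w) * g w) \<le> \<eta> * \<bar>Bg\<bar>"
      using q1 Bg w \<open>\<eta> > 0\<close> unfolding norm_mult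
      by (intro mult_mono) (auto intro: less_imp_le order_trans[OF _ abs_ge_self])
    have "norm (poly q1 w * (poly q2 w - g w) + (poly q1 w - f w) * g w)
        \<le> (\<bar>Bf\<bar> + 1) * \<eta> + \<eta> * \<bar>Bg\<bar>"
      using 1 2 by (intro norm_triangle_le add_mono)
    also have "\<dots> = \<eta> * C" by (simp add: C_def algebra_simps)
    also have "\<dots> \<le> e" using \<open>C > 0\<close> by (simp add: \<eta>_def min_mult_distrib_right)
    finally show ?thesis
      using q1 w by (simp add: algebra_simps)
  qed
  then show "\<exists>h. poly_approximable K h \<and> (\<forall>w\<in>K. norm (h w - f w * g w) \<le> e)"
    using poly_approximable_poly by blast
qed

lemma poly_approximable_sum:
  assumes "\<And>i. i \<in> I \<Longrightarrow> poly_approximable K (f i)"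
  shows "poly_approximable K (\<lambda>w. \<Sum>i\<in>I. f i w)"
proof (cases "finite I")
  case True
  then show ?thesis using assms
    by (induction I rule: finite_induct) (auto intro: poly_approximable_const poly_approximable_add)
qed (simp add: poly_approximable_const)

lemma poly_approximable_power:
  assumes "compact K" "poly_approximable K f"
  shows "poly_approximable K (\<lambda>w. f w ^ n)"
  by (induction n) (auto intro: poly_approximable_const poly_approximable_mult assms)

text \<open>Partial sums of the geometric series in \<open>r\<close> converge uniformly where \<open>|r| \<le> 1/2\<close>.\<close>
lemma poly_approximable_geometric:
  assumes K: "compact K" and f: "poly_approximable K f" and r: "poly_approximable K r"
    and small: "\<forall>w\<in>K. norm (r w) \<le> 1/2"
  shows "poly_approximable K (\<lambda>w. f w / (1 - r w))"
proof (rule poly_approximable_limit)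
  fix e :: real assume "e > 0"
  obtain B where B: "\<forall>w\<in>K. norm (f w) \<le> B"
    using poly_approximable_bounded[OF K f] by blast
  obtain N where N: "(1/2) ^ N < e / (2 * \<bar>B\<bar> + 1)"
    using real_arch_pow_inv[of "e / (2 * \<bar>B\<bar> + 1)" "1/2"] \<open>e > 0\<close> by auto
  define g where "g w = f w * (\<Sum>n<N. r w ^ n)" for w
  have "norm (g w - f w / (1 - r w)) \<le> e" if w: "w \<in> K" for w
  proof -
    have "norm (r w) \<le> 1/2" using small w by blast
    then have "1/2 \<le> norm (r w - 1)" "r w \<noteq> 1"
      using norm_triangle_ineq2[of 1 "r w"] by (auto simp: norm_minus_commute)
    have "g w = (f w * (r w ^ N - 1)) / (r w - 1)"
      by (simp add: g_def geometric_sum[OF \<open>r w \<noteq> 1\<close>])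
    moreover have "f w / (1 - r w) = - f w / (r w - 1)"
      by (metis minus_diff_eq divide_minus_right minus_divide_left)
    ultimately have "g w - f w / (1 - r w) = f w * r w ^ N / (r w - 1)"
      by (simp add: add_divide_distrib[symmetric] algebra_simps)
    also have "norm \<dots> \<le> \<bar>B\<bar> * (1/2) ^ N / (1/2)"
      unfolding norm_divide norm_mult norm_power
      using B w \<open>norm (r w) \<le> 1/2\<close> \<open>1/2 \<le> norm (r w - 1)\<close>
      by (intro frac_le mult_mono power_mono) (auto intro: order_trans[OF _ abs_ge_self])
    also have "\<dots> \<le> e"
      using N \<open>e > 0\<close> by (simp add: field_simps)
    finally show ?thesis .
  qed
  moreover have "poly_approximable K g"
    unfolding g_def using K f r
    by (intro poly_approximable_mult poly_approximable_sum poly_approximable_power) auto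
  ultimately show "\<exists>g. poly_approximable K g \<and> (\<forall>w\<in>K. norm (g w - f w / (1 - r w)) \<le> e)"
    by blast
qed

lemma poly_approximable_pole_shift:
  assumes K: "compact K" and "a \<notin> K" and a: "poly_approximable K (\<lambda>w. 1 / (w - a))"
    and near: "\<forall>w\<in>K. 2 * norm (b - a) \<le> norm (w - a)"
  shows "poly_approximable K (\<lambda>w. 1 / (w - b))"
proof (rule poly_approximable_cong)
  show "poly_approximable K (\<lambda>w. (1 / (w - a)) / (1 - (b - a) * (1 / (w - a))))"
    using K a near by (intro poly_approximable_geometric poly_approximable_mult poly_approximable_const)
      (auto simp: norm_divide divide_le_eq)
next
  fix w assume "w \<in> K"
  then have "w - a \<noteq> 0" "w - b \<noteq> 0" using near \<open>a \<notin> K\<close> by force+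
  then show "(1 / (w - a)) / (1 - (b - a) * (1 / (w - a))) = 1 / (w - b)"
    by (simp add: field_simps)
qed

lemma poly_approximable_pole_far:
  assumes K: "compact K" and "a \<noteq> 0" and far: "\<forall>w\<in>K. 2 * norm w \<le> norm a"
  shows "poly_approximable K (\<lambda>w. 1 / (w - a))"
proof (rule poly_approximable_cong)
  show "poly_approximable K (\<lambda>w. (- 1 / a) / (1 - w * (1 / a)))"
    using K far \<open>a \<noteq> 0\<close>
    by (intro poly_approximable_geometric poly_approximable_mult poly_approximable_const
        poly_approximable_ident) (auto simp: norm_divide divide_le_eq)
next
  fix w assume "w \<in> K"
  then have "w \<noteq> a" using far \<open>a \<noteq> 0\<close> by force
  then show "(- 1 / a) / (1 - w * (1 / a)) = 1 / (w - a)"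
    using \<open>a \<noteq> 0\<close> by (auto simp: field_simps)
qed

lemma poly_approximable_pole_move:
  assumes K: "compact K" "K \<noteq> {}" and "a \<notin> K"
    and xy: "x \<in> ball a (infdist a K / 5)" "y \<in> ball a (infdist a K / 5)"
    and x: "poly_approximable K (\<lambda>w. 1 / (w - x))"
  shows "poly_approximable K (\<lambda>w. 1 / (w - y))"
proof (rule poly_approximable_pole_shift[OF K(1) _ x])
  define d where "d = infdist a K"
  have far: "4/5 * d \<le> norm (w - x)" if "w \<in> K" for w
  proof -
    have "d \<le> norm (w - a)"
      using infdist_le[OF \<open>w \<in> K\<close>, of a] by (simp add: d_def dist_norm norm_minus_commute)
    then show ?thesis
      using norm_triangle_sub[of "w - a" "w - x"] xy(1) by (simp add: d_def dist_norm norm_minus_commute)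
  qed
  moreover have "d > 0"
    using infdist_pos_not_in_closed[OF compact_imp_closed[OF K(1)] K(2) \<open>a \<notin> K\<close>] by (simp add: d_def)
  ultimately show "x \<notin> K" by fastforce
  have "norm (y - x) \<le> norm (y - a) + norm (a - x)"
    using norm_triangle_ineq[of "y - a" "a - x"] by simp
  then have "norm (y - x) < 2/5 * d"
    using xy by (simp add: d_def dist_norm norm_minus_commute)
  then show "\<forall>w\<in>K. 2 * norm (y - x) \<le> norm (w - x)"
    using far by force
qed

text \<open>Runge's theorem for a single pole: admissibility of a pole is locally constant on the
  connected set \<open>-K\<close>, and poles far away from \<open>K\<close> are admissible.\<close>
lemma poly_approximable_pole:
  assumes K: "compact K" and conn: "connected (- K)" and "b \<notin> K"
  shows "poly_approximable K (\<lambda>w. 1 / (w - b))"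
proof (cases "K = {}")
  case True
  then show ?thesis by (simp add: poly_approximable_def)
next
  case False
  obtain B where B: "B > 0" "\<forall>w\<in>K. norm w \<le> B"
    using compact_imp_bounded[OF K] bounded_pos by blast
  define a0 where "a0 = complex_of_real (2 * B)"
  have "a0 \<notin> K" "poly_approximable K (\<lambda>w. 1 / (w - a0))"
    using B by (auto simp: a0_def intro!: poly_approximable_pole_far[OF K])
  show ?thesis
  proof (rule connected_induction_simple[OF conn, of a0 b "\<lambda>a. poly_approximable K (\<lambda>w. 1 / (w - a))"])
    fix a assume "a \<in> - K"
    have "infdist a K > 0"
      using infdist_pos_not_in_closed[OF compact_imp_closed[OF K] False] \<open>a \<in> - K\<close> by simp
    have "ball a (infdist a K / 5) \<subseteq> - K"
    proof
      fix y assume "y \<in> ball a (infdist a K / 5)"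
      then show "y \<in> - K" using infdist_le[of y K a] \<open>infdist a K > 0\<close> by auto
    qed
    show "\<exists>T. openin (top_of_set (- K)) T \<and> a \<in> T \<and>
        (\<forall>x\<in>T. \<forall>y\<in>T. poly_approximable K (\<lambda>w. 1 / (w - x)) \<longrightarrow> poly_approximable K (\<lambda>w. 1 / (w - y)))"
    proof (intro exI[of _ "ball a (infdist a K / 5)"] conjI ballI impI)
      show "openin (top_of_set (- K)) (ball a (infdist a K / 5))"
        using \<open>ball a (infdist a K / 5) \<subseteq> - K\<close> by (simp add: open_subset)
      show "a \<in> ball a (infdist a K / 5)" using \<open>infdist a K > 0\<close> by simp
    qed (use poly_approximable_pole_move[OF K False] \<open>a \<in> - K\<close> in blast)
  qed (use \<open>a0 \<notin> K\<close> \<open>b \<notin> K\<close> \<open>poly_approximable K (\<lambda>w. 1 / (w - a0))\<close> in auto)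
qed

lemma peak_poly:
  fixes K :: "complex set"
  assumes K: "compact K" and "connected (- K)" and "w0 \<notin> K"
  obtains q where "poly q w0 = 1" "\<forall>w\<in>K. norm (poly q w) < 1/2"
proof -
  have "bounded ((\<lambda>w. w - w0) ` K)"
    using K by (intro compact_imp_bounded compact_continuous_image continuous_intros)
  then obtain B where B: "B > 0" "\<forall>w\<in>K. norm (w - w0) \<le> B"
    by (auto simp: bounded_pos)
  obtain q0 where q0: "\<forall>w\<in>K. norm (poly q0 w - 1 / (w - w0)) < 1 / (2 * B)"
    using poly_approximable_pole[OF assms] B(1) unfolding poly_approximable_def by force
  define q where "q = 1 - [:- w0, 1:] * q0"
  have "norm (poly q w) < 1/2" if "w \<in> K" for w
  proof -
    have "w \<noteq> w0" using that \<open>w0 \<notin> K\<close> by blast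
    then have "poly q w = - ((w - w0) * (poly q0 w - 1 / (w - w0)))"
      by (simp add: q_def field_simps)
    then have "norm (poly q w) = norm (w - w0) * norm (poly q0 w - 1 / (w - w0))"
      by (simp add: norm_mult)
    also have "\<dots> < norm (w - w0) * (1 / (2 * B))"
      using q0 that \<open>w \<noteq> w0\<close> by (intro mult_strict_left_mono) auto
    also have "\<dots> \<le> B * (1 / (2 * B))"
      using B that by (intro mult_right_mono) auto
    finally show ?thesis using B by simp
  qed
  moreover have "poly q w0 = 1" by (simp add: q_def)
  ultimately show ?thesis using that by blast
qed

section \<open>Polynomial hulls of compact subsets of \<open>\<real> \<times> \<complex>\<close>\<close>

lemma hol_poly2_poly_mult: "hol_poly2 (\<lambda>(z, w). poly A z * poly B w)"
proof -
  define n where "n = Suc (max (degree A) (degree B))"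
  have poly_eq: "poly P x = (\<Sum>i<n. coeff P i * x ^ i)" if "degree P < n" for P :: "complex poly" and x
    unfolding poly_altdef using that by (intro sum.mono_neutral_left) (auto simp: coeff_eq_0)
  have "poly A z * poly B w = (\<Sum>i<n. \<Sum>j<n. (coeff A i * coeff B j) * z ^ i * w ^ j)" for z w
  proof -
    have "poly A z * poly B w = (\<Sum>i<n. coeff A i * z ^ i) * (\<Sum>j<n. coeff B j * w ^ j)"
      by (subst (1 2) poly_eq) (auto simp: n_def)
    then show ?thesis by (simp add: sum_product ac_simps)
  qed
  then show ?thesis
    unfolding hol_poly2_def by (intro exI[of _ n] exI[of _ "\<lambda>i j. coeff A i * coeff B j"]) auto
qed

lemma continuous_on_hol_poly2: "hol_poly2 p \<Longrightarrow> continuous_on S p"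
  unfolding hol_poly2_def by (auto simp: case_prod_beta intro!: continuous_intros)

lemma subset_poly_hull:
  assumes "compact K"
  shows "K \<subseteq> poly_hull K"
  unfolding poly_hull_def
proof clarify
  fix z p assume "z \<in> K" "hol_poly2 p"
  have "bounded ((\<lambda>y. norm (p y)) ` K)"
    using assms \<open>hol_poly2 p\<close>
    by (intro compact_imp_bounded compact_continuous_image continuous_on_norm continuous_on_hol_poly2)
  then show "norm (p z) \<le> (SUP y\<in>K. norm (p y))"
    using \<open>z \<in> K\<close> by (intro cSUP_upper bounded_imp_bdd_above)
qed

lemma not_in_poly_hullI:
  assumes "K \<noteq> {}" "hol_poly2 p" "\<forall>y\<in>K. norm (p y) \<le> c" "c < norm (p z)"
  shows "z \<notin> poly_hull K"
proof
  assume "z \<in> poly_hull K"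
  then have "norm (p z) \<le> (SUP y\<in>K. norm (p y))"
    using assms(2) unfolding poly_hull_def by blast
  also have "\<dots> \<le> c" using assms(1,3) by (intro cSUP_least) auto
  finally show False using assms(4) by simp
qed

definition fibre :: "('a \<times> 'b) set \<Rightarrow> 'a \<Rightarrow> 'b set" where
  "fibre D a = {w. (a, w) \<in> D}"

lemma compact_fibre:
  fixes D :: "('a::real_normed_vector \<times> 'b::real_normed_vector) set"
  assumes "compact D"
  shows "compact (fibre D a)"
proof -
  have "fibre D a = (\<lambda>w. (a, w)) -` D \<inter> snd ` D"
    by (force simp: fibre_def)
  moreover have "closed ((\<lambda>w. (a, w)) -` D)"
    using assms by (intro closed_vimage compact_imp_closed continuous_intros)
  moreover have "compact (snd ` D)"
    using assms by (intro compact_continuous_image continuous_intros)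
  ultimately show ?thesis by (simp add: closed_Int_compact)
qed

lemma M_RC_fst_eq: "y \<in> M_RC \<Longrightarrow> fst y = complex_of_real (Re (fst y))"
  unfolding M_RC_def by (auto elim!: Reals_cases)

lemma compact_bounded_Re_fst:
  fixes D :: "(complex \<times> complex) set"
  assumes "compact D"
  obtains R where "R > 0" "\<forall>y\<in>D. \<bar>Re (fst y) - x0\<bar> \<le> R"
proof -
  have "bounded ((\<lambda>y. Re (fst y) - x0) ` D)"
    using assms by (intro compact_imp_bounded compact_continuous_image continuous_intros)
  then show ?thesis using that by (auto simp: bounded_pos)
qed

definition bump_poly :: "real \<Rightarrow> real \<Rightarrow> complex poly" where
  "bump_poly x0 R = 1 - smult (1 / complex_of_real (R\<^sup>2)) ([:- complex_of_real x0, 1:] ^ 2)"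

lemma poly_bump_poly:
  "poly (bump_poly x0 R) z = 1 - (z - complex_of_real x0)\<^sup>2 / complex_of_real (R\<^sup>2)"
  by (simp add: bump_poly_def divide_inverse mult.commute)

lemma poly_bump_poly_of_real:
  "poly (bump_poly x0 R) (complex_of_real s) = complex_of_real (1 - (s - x0)\<^sup>2 / R\<^sup>2)"
  by (simp add: poly_bump_poly)

lemma bump_bounds:
  fixes R s :: real
  assumes "R > 0" "\<bar>s - x0\<bar> \<le> R"
  shows "0 \<le> 1 - (s - x0)\<^sup>2 / R\<^sup>2" "1 - (s - x0)\<^sup>2 / R\<^sup>2 \<le> 1"
  using assms abs_le_square_iff[of "s - x0" R] by (auto simp: divide_le_eq)

lemma poly_bump_poly_nonreal:
  "poly (bump_poly x0 R) (Complex x0 b) = complex_of_real (1 + b\<^sup>2 / R\<^sup>2)"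
proof -
  have "Complex x0 b - complex_of_real x0 = \<i> * complex_of_real b"
    by (simp add: complex_eq_iff)
  then show ?thesis
    by (simp add: poly_bump_poly power_mult_distrib)
qed

lemma not_in_poly_hull_nonreal:
  fixes D :: "(complex \<times> complex) set"
  assumes D: "compact D" "D \<noteq> {}" "D \<subseteq> M_RC" and "Im a \<noteq> 0"
  shows "(a, w0) \<notin> poly_hull D"
proof -
  obtain R where R: "R > 0" "\<forall>y\<in>D. \<bar>Re (fst y) - Re a\<bar> \<le> R"
    using compact_bounded_Re_fst[OF D(1)] by blast
  define p where "p = (\<lambda>(z, w). poly (bump_poly (Re a) R) z * poly 1 w)"
  have "norm (p y) \<le> 1" if "y \<in> D" for y
  proof -
    have "fst y = complex_of_real (Re (fst y))"
      using that D(3) by (auto intro: M_RC_fst_eq)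
    then have "p y = complex_of_real (1 - (Re (fst y) - Re a)\<^sup>2 / R\<^sup>2)"
      unfolding p_def case_prod_beta poly_1 mult_1_right by (metis poly_bump_poly_of_real)
    then have "norm (p y) = \<bar>1 - (Re (fst y) - Re a)\<^sup>2 / R\<^sup>2\<bar>"
      by (simp only: norm_of_real)
    then show ?thesis
      using bump_bounds[OF R(1), of "Re (fst y)" "Re a"] R(2) that by simp
  qed
  moreover have "p (a, w0) = complex_of_real (1 + (Im a)\<^sup>2 / R\<^sup>2)"
    using poly_bump_poly_nonreal[of "Re a" R "Im a"] by (simp add: p_def)
  then have "norm (p (a, w0)) = \<bar>1 + (Im a)\<^sup>2 / R\<^sup>2\<bar>"
    by (simp only: norm_of_real)
  then have "1 < norm (p (a, w0))"
    using \<open>Im a \<noteq> 0\<close> R(1) by simp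
  moreover have "hol_poly2 p"
    unfolding p_def by (rule hol_poly2_poly_mult)
  ultimately show ?thesis
    using not_in_poly_hullI[OF D(2), of p 1] by blast
qed

lemma continuous_on_compact_less_bound:
  fixes f :: "'a::topological_space \<Rightarrow> real"
  assumes "compact A" "continuous_on A f" "\<forall>x\<in>A. f x < c"
  obtains c' where "c' < c" "\<forall>x\<in>A. f x \<le> c'"
proof (cases "A = {}")
  case False
  then obtain x where "x \<in> A" "\<forall>y\<in>A. f y \<le> f x"
    using continuous_attains_sup[OF assms(1) _ assms(2)] by blast
  then show ?thesis using that assms(3) by blast
qed (use that[of "c - 1"] in auto)

lemma power_damping:
  fixes \<beta> \<phi> :: "'a \<Rightarrow> real"
  assumes \<beta>: "\<And>y. y \<in> D \<Longrightarrow> 0 \<le> \<beta> y \<and> \<beta> y \<le> 1" and \<phi>: "\<And>y. y \<in> D \<Longrightarrow> 0 \<le> \<phi> y \<and> \<phi> y \<le> Q"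
    and "\<rho> < 1" "\<theta> > 0" and damped: "\<And>y. y \<in> D \<Longrightarrow> \<theta> \<le> \<phi> y \<Longrightarrow> \<beta> y \<le> \<rho>"
  obtains N where "\<And>y. y \<in> D \<Longrightarrow> \<beta> y ^ N * \<phi> y \<le> \<theta>"
proof -
  obtain N where N: "max \<rho> 0 ^ N < \<theta> / (\<bar>Q\<bar> + 1)"
    using real_arch_pow_inv[of "\<theta> / (\<bar>Q\<bar> + 1)" "max \<rho> 0"] \<open>\<rho> < 1\<close> \<open>\<theta> > 0\<close> by auto
  have "\<beta> y ^ N * \<phi> y \<le> \<theta>" if "y \<in> D" for y
  proof (cases "\<theta> \<le> \<phi> y")
    case True
    then have "\<beta> y ^ N * \<phi> y \<le> max \<rho> 0 ^ N * (\<bar>Q\<bar> + 1)"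
      using \<beta>[OF that] \<phi>[OF that] damped[OF that]
      by (intro mult_mono power_mono) auto
    also have "\<dots> \<le> \<theta>"
      using N by (simp add: field_simps)
    finally show ?thesis .
  next
    case False
    then show ?thesis
      using \<beta>[OF that] \<phi>[OF that] mult_left_le_one_le[of "\<phi> y" "\<beta> y ^ N"]
      by (simp add: power_le_one)
  qed
  then show ?thesis using that by blast
qed

lemma fibre_peak_poly:
  fixes D :: "(complex \<times> complex) set"
  assumes D: "compact D" "D \<subseteq> M_RC" and conn: "connected (- fibre D (complex_of_real x0))"
    and notin: "(complex_of_real x0, w0) \<notin> D" and R: "R > 0"
  obtains q \<rho> where "poly q w0 = 1" "\<rho> < 1"
    "\<forall>y\<in>D. 1/2 \<le> norm (poly q (snd y)) \<longrightarrow> 1 - (Re (fst y) - x0)\<^sup>2 / R\<^sup>2 \<le> \<rho>"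
proof -
  obtain q where q: "poly q w0 = 1" "\<forall>w\<in>fibre D (complex_of_real x0). norm (poly q w) < 1/2"
    using peak_poly[OF compact_fibre[OF D(1)] conn] notin by (auto simp: fibre_def)
  define A where "A = D \<inter> {y. 1/2 \<le> norm (poly q (snd y))}"
  have "compact A"
    unfolding A_def by (intro compact_Int_closed D(1) closed_Collect_le continuous_intros)
  have "\<forall>y\<in>A. 1 - (Re (fst y) - x0)\<^sup>2 / R\<^sup>2 < 1"
  proof
    fix y assume "y \<in> A"
    have "Re (fst y) \<noteq> x0"
    proof
      assume "Re (fst y) = x0"
      then have "y = (complex_of_real x0, snd y)"
        using M_RC_fst_eq[of y] \<open>y \<in> A\<close> D(2) by (auto simp: A_def prod_eq_iff)
      then have "snd y \<in> fibre D (complex_of_real x0)"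
        using \<open>y \<in> A\<close> unfolding A_def fibre_def by (metis IntD1 mem_Collect_eq)
      then show False using q(2) \<open>y \<in> A\<close> by (force simp: A_def)
    qed
    then show "1 - (Re (fst y) - x0)\<^sup>2 / R\<^sup>2 < 1" using R by simp
  qed
  moreover have "continuous_on A (\<lambda>y. 1 - (Re (fst y) - x0)\<^sup>2 / R\<^sup>2)"
    using R by (intro continuous_intros) auto
  ultimately obtain \<rho> where "\<rho> < 1" "\<forall>y\<in>A. 1 - (Re (fst y) - x0)\<^sup>2 / R\<^sup>2 \<le> \<rho>"
    using continuous_on_compact_less_bound[OF \<open>compact A\<close>] by blast
  then show ?thesis using that q(1) by (auto simp: A_def)
qed

lemma not_in_poly_hull_real:
  fixes D :: "(complex \<times> complex) set"
  assumes D: "compact D" "D \<noteq> {}" "D \<subseteq> M_RC" and conn: "connected (- fibre D (complex_of_real x0))"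
    and notin: "(complex_of_real x0, w0) \<notin> D"
  shows "(complex_of_real x0, w0) \<notin> poly_hull D"
proof -
  obtain R where R: "R > 0" "\<forall>y\<in>D. \<bar>Re (fst y) - x0\<bar> \<le> R"
    using compact_bounded_Re_fst[OF D(1)] by blast
  define \<beta> where "\<beta> y = 1 - (Re (fst y) - x0)\<^sup>2 / R\<^sup>2" for y :: "complex \<times> complex"
  have \<beta>: "0 \<le> \<beta> y" "\<beta> y \<le> 1" if "y \<in> D" for y
    using bump_bounds[OF R(1)] R(2) that by (auto simp: \<beta>_def)
  obtain q \<rho> where q: "poly q w0 = 1" and \<rho>: "\<rho> < 1" "\<forall>y\<in>D. 1/2 \<le> norm (poly q (snd y)) \<longrightarrow> \<beta> y \<le> \<rho>"
    using fibre_peak_poly[OF D(1,3) conn notin R(1)] unfolding \<beta>_def by blast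
  have "bounded ((\<lambda>y. poly q (snd y)) ` D)"
    using D(1) by (intro compact_imp_bounded compact_continuous_image continuous_intros)
  then obtain Q where "\<forall>y\<in>D. norm (poly q (snd y)) \<le> Q"
    by (auto simp: bounded_iff)
  then obtain N where N: "\<And>y. y \<in> D \<Longrightarrow> \<beta> y ^ N * norm (poly q (snd y)) \<le> 1/2"
    using power_damping[of D \<beta> "\<lambda>y. norm (poly q (snd y))" Q \<rho> "1/2"] \<beta> \<rho> by auto
  define p where "p = (\<lambda>(z, w). poly (bump_poly x0 R ^ N) z * poly q w)"
  have "norm (p y) \<le> 1/2" if "y \<in> D" for y
  proof -
    have "fst y = complex_of_real (Re (fst y))"
      using that D(3) by (auto intro: M_RC_fst_eq)
    then have "p y = complex_of_real (\<beta> y ^ N) * poly q (snd y)"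
      unfolding p_def case_prod_beta poly_power \<beta>_def by (metis of_real_power poly_bump_poly_of_real)
    then show ?thesis
      using \<beta>[OF that] N[OF that] by (simp add: norm_mult norm_power)
  qed
  moreover have "p (complex_of_real x0, w0) = 1"
    using q(1) poly_bump_poly_of_real[of x0 R x0] by (simp add: p_def poly_power)
  moreover have "hol_poly2 p"
    unfolding p_def by (rule hol_poly2_poly_mult)
  ultimately show ?thesis
    using not_in_poly_hullI[OF D(2), of p "1/2"] by force
qed

lemma poly_hull_eq_if_fibres_connected:
  fixes D :: "(complex \<times> complex) set"
  assumes D: "compact D" "D \<noteq> {}" "D \<subseteq> M_RC"
    and conn: "\<And>x. connected (- fibre D (complex_of_real x))"
  shows "poly_hull D = D"
proof
  show "D \<subseteq> poly_hull D" by (rule subset_poly_hull[OF D(1)])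
  show "poly_hull D \<subseteq> D"
  proof
    fix z assume z: "z \<in> poly_hull D"
    obtain a w where "z = (a, w)" by fastforce
    show "z \<in> D"
    proof (cases "Im a = 0")
      case True
      then have "a = complex_of_real (Re a)" by (simp add: complex_eq_iff)
      then show ?thesis
        using not_in_poly_hull_real[OF D conn] z \<open>z = (a, w)\<close> by metis
    qed (use not_in_poly_hull_nonreal[OF D] z \<open>z = (a, w)\<close> in blast)
  qed
qed

section \<open>Derivatives of maps into embedded submanifolds\<close>

lemma has_derivative_left_inverse_lower_bound:
  fixes f :: "'a::real_normed_vector \<Rightarrow> 'b::real_normed_vector"
  assumes f: "(f has_derivative f') (at x)" and g': "bounded_linear g'" "g' \<circ> f' = id"
  obtains C d where "C > 0" "d > 0" "\<And>u. norm (u - x) < d \<Longrightarrow> norm (u - x) \<le> C * norm (f u - f x)"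
proof -
  obtain C0 where C0: "C0 > 0" "\<And>v. norm (g' v) \<le> norm v * C0"
    using bounded_linear.pos_bounded[OF g'(1)] by blast
  have "1 / (2 * C0) > 0" using C0(1) by simp
  then obtain d where "d > 0" and
    d: "\<And>u. norm (u - x) < d \<Longrightarrow> norm (f u - f x - f' (u - x)) \<le> 1 / (2 * C0) * norm (u - x)"
    using f unfolding has_derivative_at_alt by blast
  have "norm (u - x) \<le> 2 * C0 * norm (f u - f x)" if "norm (u - x) < d" for u
  proof -
    have "norm (u - x) = norm (g' (f' (u - x)))"
      using g'(2) by (metis comp_apply id_apply)
    also have "\<dots> \<le> norm (f' (u - x)) * C0" by (rule C0(2))
    also have "\<dots> \<le> (norm (f u - f x) + norm (f u - f x - f' (u - x))) * C0"
      using C0(1) norm_triangle_ineq4[of "f u - f x" "f u - f x - f' (u - x)"]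
      by (intro mult_right_mono) auto
    also have "\<dots> \<le> (norm (f u - f x) + 1 / (2 * C0) * norm (u - x)) * C0"
      using C0(1) d[OF that] by (intro mult_right_mono) auto
    finally show ?thesis using C0(1) by (simp add: field_simps)
  qed
  then show ?thesis using that[of "2 * C0" d] C0(1) \<open>d > 0\<close> by auto
qed

lemma left_inverse_comp_lipschitz_at:
  fixes f :: "'a::real_normed_vector \<Rightarrow> 'b::real_normed_vector" and g :: "'c::real_normed_vector \<Rightarrow> 'a"
  assumes f: "(f has_derivative f') (at (g y))" and g': "bounded_linear g'" "g' \<circ> f' = id"
    and k: "(k has_derivative k') (at y)" and g: "continuous (at y) g"
    and T: "open T" "y \<in> T" "\<And>z. z \<in> T \<Longrightarrow> f (g z) = k z"
  obtains B d where "d > 0" "\<And>z. norm (z - y) < d \<Longrightarrow> norm (g z - g y) \<le> B * norm (z - y)"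
proof -
  obtain C d1 where C: "C > 0" "d1 > 0" "\<And>u. norm (u - g y) < d1 \<Longrightarrow> norm (u - g y) \<le> C * norm (f u - f (g y))"
    using has_derivative_left_inverse_lower_bound[OF f g'] by blast
  obtain d2 where "d2 > 0" and d2: "\<And>z. norm (z - y) < d2 \<Longrightarrow> norm (g z - g y) < d1"
    using g C(2) unfolding continuous_at_eps_delta dist_norm by blast
  obtain d3 where "d3 > 0" "ball y d3 \<subseteq> T"
    using T(1,2) open_contains_ball_eq by blast
  obtain K where K: "\<And>v. norm (k' v) \<le> norm v * K"
    using bounded_linear.bounded[OF has_derivative_bounded_linear[OF k]] by blast
  obtain d4 where "d4 > 0" and d4: "\<And>z. norm (z - y) < d4 \<Longrightarrow> norm (k z - k y - k' (z - y)) \<le> 1 * norm (z - y)"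
    using k unfolding has_derivative_at_alt by (meson zero_less_one)
  have "norm (g z - g y) \<le> C * (K + 1) * norm (z - y)" if z: "norm (z - y) < min (min d2 d3) d4" for z
  proof -
    have "z \<in> T" using z \<open>ball y d3 \<subseteq> T\<close> by (auto simp: dist_norm norm_minus_commute)
    have "norm (k z - k y) \<le> norm (k' (z - y)) + norm (k z - k y - k' (z - y))"
      by (rule norm_triangle_sub)
    also have "\<dots> \<le> norm (z - y) * K + 1 * norm (z - y)"
      using K[of "z - y"] d4[of z] z by (intro add_mono) auto
    also have "\<dots> = (K + 1) * norm (z - y)" by (simp add: algebra_simps)
    finally have "C * norm (k z - k y) \<le> C * ((K + 1) * norm (z - y))"
      using C(1) by (intro mult_left_mono) auto
    moreover have "norm (g z - g y) \<le> C * norm (k z - k y)"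
      using C(3)[of "g z"] d2 z T(3)[OF \<open>z \<in> T\<close>] T(3)[OF T(2)] by auto
    ultimately show ?thesis by simp
  qed
  then show ?thesis
    using that[of "min (min d2 d3) d4"] \<open>d2 > 0\<close> \<open>d3 > 0\<close> \<open>d4 > 0\<close> by auto
qed

lemma left_inverse_comp_remainder:
  assumes "bounded_linear g'" "g' \<circ> f' = id" "f (g z) = k z" "f (g y) = k y"
  shows "g z - g y - g' (k' (z - y))
    = g' (k z - k y - k' (z - y)) - g' (f (g z) - f (g y) - f' (g z - g y))"
proof -
  have lin: "g' (a - b) = g' a - g' b" for a b
    by (rule linear_diff[OF bounded_linear.linear[OF assms(1)]])
  have "g' (k z - k y - k' (z - y)) - g' (f (g z) - f (g y) - f' (g z - g y))
      = g' (f' (g z - g y) - k' (z - y))"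
    using assms(3,4) by (simp add: lin[symmetric] algebra_simps)
  also have "\<dots> = g z - g y - g' (k' (z - y))"
    using assms(2) by (simp add: lin pointfree_idE)
  finally show ?thesis ..
qed

text \<open>A variant of \<open>has_derivative_inverse_basic\<close> in which \<open>g\<close> inverts \<open>f\<close> only along the
  differentiable map \<open>k\<close>.\<close>
lemma has_derivative_left_inverse_comp:
  fixes f :: "'a::real_normed_vector \<Rightarrow> 'b::real_normed_vector" and g :: "'c::real_normed_vector \<Rightarrow> 'a"
  assumes f: "(f has_derivative f') (at (g y))" and g': "bounded_linear g'" "g' \<circ> f' = id"
    and k: "(k has_derivative k') (at y)" and g: "continuous (at y) g"
    and T: "open T" "y \<in> T" "\<And>z. z \<in> T \<Longrightarrow> f (g z) = k z"
  shows "(g has_derivative (\<lambda>v. g' (k' v))) (at y)"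
  unfolding has_derivative_at_alt
proof (intro conjI allI impI)
  show "bounded_linear (\<lambda>v. g' (k' v))"
    using bounded_linear_compose[OF g'(1) has_derivative_bounded_linear[OF k]] .
  fix e :: real assume "e > 0"
  obtain B d0 where "d0 > 0" and d0: "\<And>z. norm (z - y) < d0 \<Longrightarrow> norm (g z - g y) \<le> B * norm (z - y)"
    using left_inverse_comp_lipschitz_at[OF assms] by blast
  obtain C where C: "C > 0" "\<And>v. norm (g' v) \<le> norm v * C"
    using bounded_linear.pos_bounded[OF g'(1)] by blast
  define \<eta> where "\<eta> = e / (C * (1 + \<bar>B\<bar>))"
  have "C * (1 + \<bar>B\<bar>) > 0" using C(1) by (simp add: add_pos_nonneg)
  then have "\<eta> > 0" using \<open>e > 0\<close> by (simp add: \<eta>_def)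
  then obtain d1 where "d1 > 0" and
    d1: "\<And>u. norm (u - g y) < d1 \<Longrightarrow> norm (f u - f (g y) - f' (u - g y)) \<le> \<eta> * norm (u - g y)"
    using f unfolding has_derivative_at_alt by blast
  obtain d2 where "d2 > 0" and d2: "\<And>z. norm (z - y) < d2 \<Longrightarrow> norm (g z - g y) < d1"
    using g \<open>d1 > 0\<close> unfolding continuous_at_eps_delta dist_norm by blast
  obtain d3 where "d3 > 0" "ball y d3 \<subseteq> T"
    using T(1,2) open_contains_ball_eq by blast
  obtain d4 where "d4 > 0" and d4: "\<And>z. norm (z - y) < d4 \<Longrightarrow> norm (k z - k y - k' (z - y)) \<le> \<eta> * norm (z - y)"
    using k \<open>\<eta> > 0\<close> unfolding has_derivative_at_alt by blast
  have "norm (g z - g y - g' (k' (z - y))) \<le> e * norm (z - y)"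
    if z: "norm (z - y) < min (min d0 d2) (min d3 d4)" for z
  proof -
    have "z \<in> T" using z \<open>ball y d3 \<subseteq> T\<close> by (auto simp: dist_norm norm_minus_commute)
    have "g z - g y - g' (k' (z - y))
        = g' (k z - k y - k' (z - y)) - g' (f (g z) - f (g y) - f' (g z - g y))"
      using left_inverse_comp_remainder[OF g' T(3)[OF \<open>z \<in> T\<close>] T(3)[OF T(2)]] .
    also have "norm \<dots> \<le> norm (g' (k z - k y - k' (z - y))) + norm (g' (f (g z) - f (g y) - f' (g z - g y)))"
      by (rule norm_triangle_ineq4)
    also have "\<dots> \<le> (\<eta> * norm (z - y)) * C + (\<eta> * (\<bar>B\<bar> * norm (z - y))) * C"
      using C d0[of z] d1[of "g z"] d2[of z] d4[of z] z \<open>\<eta> > 0\<close>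
        mult_right_mono[OF abs_ge_self[of B] norm_ge_zero[of "z - y"]]
      by (intro add_mono order_trans[OF C(2)] mult_right_mono) (auto intro: order_trans)
    also have "\<dots> = \<eta> * (C * (1 + \<bar>B\<bar>)) * norm (z - y)"
      by (simp add: algebra_simps)
    also have "\<dots> = e * norm (z - y)"
      using \<open>C * (1 + \<bar>B\<bar>) > 0\<close> C(1) by (simp add: \<eta>_def)
    finally show ?thesis .
  qed
  then show "\<exists>d>0. \<forall>z. norm (z - y) < d \<longrightarrow> norm (g z - g y - g' (k' (z - y))) \<le> e * norm (z - y)"
    using \<open>d0 > 0\<close> \<open>d2 > 0\<close> \<open>d3 > 0\<close> \<open>d4 > 0\<close> by (intro exI[of _ "min (min d0 d2) (min d3 d4)"]) auto
qed

text \<open>Here \<open>\<psi>\<close> need only be continuous: it is then differentiable because \<open>h\<close> is.\<close>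
lemma immersion_comp_derivative_in_range:
  fixes \<phi> :: "'a::euclidean_space \<Rightarrow> 'b::euclidean_space" and \<psi> :: "'c::real_normed_vector \<Rightarrow> 'a"
  assumes T: "open T" "\<zeta> \<in> T" and \<phi>\<psi>: "\<And>z. z \<in> T \<Longrightarrow> \<phi> (\<psi> z) = h z" and "isCont \<psi> \<zeta>"
    and L: "(\<phi> has_derivative L) (at (\<psi> \<zeta>))" "inj L" and H: "(h has_derivative H) (at \<zeta>)"
  shows "H v \<in> range L"
proof -
  obtain L' where L': "linear L'" "L' \<circ> L = id"
    using linear_injective_left_inverse[OF has_derivative_linear[OF L(1)] L(2)] by blast
  have "(\<psi> has_derivative (\<lambda>u. L' (H u))) (at \<zeta>)"
  proof (rule has_derivative_left_inverse_comp[where f = \<phi> and g = \<psi> and k = h and T = T])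
    show "bounded_linear L'" using L'(1) by (simp add: linear_conv_bounded_linear)
  qed (use L(1) L'(2) H \<open>isCont \<psi> \<zeta>\<close> T \<phi>\<psi> in auto)
  then have "((\<lambda>z. \<phi> (\<psi> z)) has_derivative (\<lambda>u. L (L' (H u)))) (at \<zeta>)"
    using diff_chain_at[of \<psi> _ \<zeta> \<phi> L] L(1) by (simp add: o_def)
  moreover have "((\<lambda>z. \<phi> (\<psi> z)) has_derivative H) (at \<zeta>)"
    using \<phi>\<psi> by (intro has_derivative_transform_within_open[OF H T]) auto
  ultimately have "(\<lambda>u. L (L' (H u))) = H"
    by (rule has_derivative_unique)
  then show ?thesis by (metis rangeI)
qed

lemma totally_real_submanifold_derivative:
  fixes h :: "'c::real_normed_vector \<Rightarrow> complex \<times> complex"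
  assumes N: "totally_real_submanifold TYPE('a::euclidean_space) N"
    and T: "open T" "\<zeta> \<in> T" and h: "continuous_on T h" "h ` T \<subseteq> N" "(h has_derivative H) (at \<zeta>)"
    and "H v = cmul_i (H w)"
  shows "H v = 0"
proof -
  have "h \<zeta> \<in> N" using h(2) T(2) by blast
  then obtain U :: "'a set" and W \<phi> where chart: "open W" "h \<zeta> \<in> W"
    and chart': "inj_on \<phi> U" "\<phi> ` U = N \<inter> W" "continuous_on (N \<inter> W) (inv_into U \<phi>)"
      "\<forall>x\<in>U. \<exists>L. (\<phi> has_derivative L) (at x) \<and> inj L \<and> (\<forall>v w. L v = cmul_i (L w) \<longrightarrow> L v = 0)"
    using N unfolding totally_real_submanifold_def by meson
  define T' where "T' = T \<inter> h -` W"
  define \<psi> where "\<psi> = inv_into U \<phi> \<circ> h"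
  have "open T'" unfolding T'_def by (rule continuous_open_preimage[OF h(1) T(1) chart(1)])
  have "\<zeta> \<in> T'" using T(2) chart(2) by (simp add: T'_def)
  have hT': "h ` T' \<subseteq> N \<inter> W" using h(2) by (auto simp: T'_def)
  have \<phi>\<psi>: "\<phi> (\<psi> z) = h z" if "z \<in> T'" for z
    using hT' that chart'(2) by (metis \<psi>_def comp_apply f_inv_into_f image_subset_iff)
  have "\<psi> \<zeta> \<in> U"
    using hT' \<open>\<zeta> \<in> T'\<close> chart'(2) by (metis \<psi>_def comp_apply image_subset_iff inv_into_into)
  then obtain L where L: "(\<phi> has_derivative L) (at (\<psi> \<zeta>))" "inj L"
      "\<forall>v w. L v = cmul_i (L w) \<longrightarrow> L v = 0"
    using chart'(4) by blast
  have "continuous_on T' \<psi>"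
    unfolding \<psi>_def using hT' by (intro continuous_on_compose continuous_on_subset[OF h(1)]
        continuous_on_subset[OF chart'(3)]) (auto simp: T'_def)
  then have "isCont \<psi> \<zeta>"
    using \<open>open T'\<close> \<open>\<zeta> \<in> T'\<close> continuous_on_eq_continuous_at by blast
  then have "H u \<in> range L" for u
    using immersion_comp_derivative_in_range[OF \<open>open T'\<close> \<open>\<zeta> \<in> T'\<close> \<phi>\<psi> _ L(1,2) h(3)] by blast
  then show "H v = 0"
    using L(3) \<open>H v = cmul_i (H w)\<close> by (metis rangeE)
qed

section \<open>Fibres of totally real discs in \<open>\<real> \<times> \<complex>\<close>\<close>

lemma derivative_Im_fst_M_RC:
  fixes h :: "'a::real_normed_vector \<Rightarrow> complex \<times> complex"
  assumes T: "open T" "\<zeta> \<in> T" and "h ` T \<subseteq> M_RC" and H: "(h has_derivative H) (at \<zeta>)"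
  shows "(\<lambda>v. Im (fst (H v))) = (\<lambda>v. 0)"
proof -
  have "bounded_linear (\<lambda>y::complex \<times> complex. Im (fst y))"
    by (rule bounded_linear_compose[OF bounded_linear_Im bounded_linear_fst])
  then have "((\<lambda>z. Im (fst (h z))) has_derivative (\<lambda>v. Im (fst (H v)))) (at \<zeta>)"
    using H by (rule bounded_linear.has_derivative)
  moreover have "((\<lambda>z. Im (fst (h z))) has_derivative (\<lambda>v. 0)) (at \<zeta>)"
  proof (rule has_derivative_transform_within_open[OF has_derivative_const T])
    fix z assume "z \<in> T"
    then show "0 = Im (fst (h z))"
      using \<open>h ` T \<subseteq> M_RC\<close> M_RC_fst_eq[of "h z"] by (metis Im_complex_of_real image_subset_iff)
  qed
  ultimately show ?thesis
    by (rule has_derivative_unique)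
qed

lemma M_RC_derivative_Re_fst_nonzero:
  fixes h :: "complex \<Rightarrow> complex \<times> complex"
  assumes N: "totally_real_submanifold TYPE('a::euclidean_space) N"
    and T: "open T" "\<zeta> \<in> T" and h: "continuous_on T h" "h ` T \<subseteq> N \<inter> M_RC"
    and H: "(h has_derivative H) (at \<zeta>)" "inj H"
  shows "(\<lambda>v. Re (fst (H v))) \<noteq> (\<lambda>v. 0)"
proof
  assume Re0: "(\<lambda>v. Re (fst (H v))) = (\<lambda>v. 0)"
  have Im0: "(\<lambda>v. Im (fst (H v))) = (\<lambda>v. 0)"
    using derivative_Im_fst_M_RC[OF T _ H(1)] h(2) by blast
  have fst0: "fst (H v) = 0" for v
    using fun_cong[OF Re0, of v] fun_cong[OF Im0, of v] by (simp add: complex_eq_iff)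
  then have H_eq: "H v = (0, snd (H v))" for v
    by (simp add: prod_eq_iff)
  have lin: "linear H" using H(1) by (rule has_derivative_linear)
  then have "linear (\<lambda>v. snd (H v))"
    using linear_compose[OF _ linear_snd] unfolding o_def by blast
  moreover have "inj (\<lambda>v. snd (H v))"
    using H(2) H_eq unfolding inj_def by metis
  ultimately obtain t where t: "snd (H t) = \<i> * snd (H 1)"
    by (metis linear_inj_imp_surj surjD)
  then have "H t = cmul_i (H 1)"
    using fst0[of t] fst0[of 1] by (simp add: cmul_i_def prod_eq_iff)
  then have "H t = 0"
    using totally_real_submanifold_derivative[OF N T h(1) _ H(1)] h(2) by blast
  then have "t = 0"
    using H(2) linear_0[OF lin] by (metis injD)
  then have "H 1 = H 0"
    using t H_eq[of 1] H_eq[of 0] linear_0[OF lin] by simp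
  then show False
    using H(2) by (simp add: inj_eq)
qed

lemma homeomorphism_C2_derivative_inj:
  fixes h :: "'a::euclidean_space \<Rightarrow> 'b::euclidean_space"
  assumes hom: "homeomorphism A B h g" and "C2_on A h" "C2_on B g" and z: "z \<in> interior A"
  obtains H where "(h has_derivative H) (at z)" "inj H"
proof -
  obtain V Dh where V: "A \<subseteq> V" "\<forall>x\<in>V. (h has_derivative blinfun_apply (Dh x)) (at x)"
    using \<open>C2_on A h\<close> unfolding C2_on_def by blast
  obtain V' Dg where V': "B \<subseteq> V'" "\<forall>x\<in>V'. (g has_derivative blinfun_apply (Dg x)) (at x)"
    using \<open>C2_on B g\<close> unfolding C2_on_def by blast
  have "z \<in> A" using z interior_subset by blast
  then have "h z \<in> B" using hom by (auto simp: homeomorphism_def)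
  have dh: "(h has_derivative Dh z) (at z)" using V \<open>z \<in> A\<close> by blast
  then have "((g \<circ> h) has_derivative (Dg (h z) \<circ> Dh z)) (at z)"
    using V' \<open>h z \<in> B\<close> by (intro diff_chain_at) auto
  moreover have "((g \<circ> h) has_derivative id) (at z)"
  proof (rule has_derivative_transform_within_open[OF _ open_interior z])
    show "(id has_derivative id) (at z)" by (simp add: id_def)
    show "id x = (g \<circ> h) x" if "x \<in> interior A" for x
      using hom that interior_subset by (force simp: homeomorphism_def)
  qed
  ultimately have "Dg (h z) \<circ> Dh z = id" by (rule has_derivative_unique)
  then have "inj (Dh z)" by (metis inj_on_id inj_on_imageI2)
  then show ?thesis using that dh by blast
qed

lemma bounded_component_subset_ball:
  fixes S :: "'a::euclidean_space set"
  assumes "2 \<le> DIM('a)" "closed S" "S \<subseteq> cball a r" "C \<in> components (- S)" "bounded C"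
  shows "C \<subseteq> ball a r"
proof -
  have "C \<subseteq> cball a r"
  proof (rule ccontr)
    assume "\<not> C \<subseteq> cball a r"
    moreover have "connected (- cball a r)"
      using assms(1) by (intro connected_complement_bounded_convex) auto
    ultimately have "- cball a r \<subseteq> C"
      using components_maximal[OF assms(4)] assms(3) by blast
    then have "bounded (cball a r \<union> - cball a r)"
      using assms(5) bounded_subset bounded_Un bounded_cball by blast
    moreover have "cball a r \<union> - cball a r = UNIV" by blast
    ultimately show False by simp
  qed
  moreover have "open C"
    using open_components[OF _ assms(4)] assms(2) by auto
  ultimately show ?thesis
    using interior_maximal[of C "cball a r"] by (simp add: interior_cball)
qed

lemma bounded_open_interior_extremum:
  fixes u :: "'a::euclidean_space \<Rightarrow> real"
  assumes "bounded C" "open C" "C \<noteq> {}" "continuous_on (closure C) u"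
    and frontier: "\<And>z. z \<in> frontier C \<Longrightarrow> u z = c"
  obtains m where "m \<in> C" "(\<forall>y\<in>C. u y \<le> u m) \<or> (\<forall>y\<in>C. u m \<le> u y)"
proof -
  have "compact (closure C)" "closure C \<noteq> {}"
    using assms(1,3) by (auto simp: compact_closure)
  then obtain m1 m2 where m1: "m1 \<in> closure C" "\<forall>y\<in>closure C. u y \<le> u m1"
    and m2: "m2 \<in> closure C" "\<forall>y\<in>closure C. u m2 \<le> u y"
    using continuous_attains_sup[of "closure C" u] continuous_attains_inf[of "closure C" u] assms(4)
    by blast
  have bounds: "u m2 \<le> u y" "u y \<le> u m1" if "y \<in> C" for y
    using m1(2) m2(2) closure_subset that by blast+
  consider "m1 \<in> C" | "m2 \<in> C" | "m1 \<in> frontier C" "m2 \<in> frontier C"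
    using m1(1) m2(1) closure_Un_frontier[of C] by blast
  then show ?thesis
  proof cases
    case 3
    obtain y where "y \<in> C" using assms(3) by blast
    moreover have "u y = u m1"
      using bounds[OF \<open>y \<in> C\<close>] frontier[OF 3(1)] frontier[OF 3(2)] by simp
    ultimately show ?thesis using that bounds by force
  qed (use that bounds in blast)+
qed

text \<open>A bounded component of the complement of a level set would carry an interior extremum.\<close>
lemma connected_complement_level_set:
  fixes u :: "'a::euclidean_space \<Rightarrow> real"
  assumes "2 \<le> DIM('a)" and cont: "continuous_on (cball a r) u"
    and grad: "\<And>z. z \<in> ball a r \<Longrightarrow> \<exists>U. (u has_derivative U) (at z) \<and> U \<noteq> (\<lambda>v. 0)"
  shows "connected (- {z \<in> cball a r. u z = c})"
proof (rule ccontr)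
  define S where "S = {z \<in> cball a r. u z = c}"
  assume "\<not> connected (- {z \<in> cball a r. u z = c})"
  moreover have "S \<subseteq> cball a r" by (auto simp: S_def)
  then have "bounded (- (- S))"
    using bounded_subset[OF bounded_cball] by simp
  ultimately obtain C where C: "C \<in> components (- S)" "bounded C"
    using cobounded_has_bounded_component[of "- S"] assms(1) by (auto simp: S_def)
  have "closed S"
    unfolding S_def by (rule continuous_closed_preimage_constant[OF cont closed_cball])
  have "C \<subseteq> ball a r"
    using bounded_component_subset_ball[OF assms(1) \<open>closed S\<close> \<open>S \<subseteq> cball a r\<close> C] .
  have "open C"
    using open_components[OF _ C(1)] \<open>closed S\<close> by auto
  have "closure C \<subseteq> cball a r"
    using \<open>C \<subseteq> ball a r\<close> ball_subset_cball by (intro closure_minimal) auto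
  moreover have "u z = c" if "z \<in> frontier C" for z
    using frontier_of_components_closed_complement[OF \<open>closed S\<close> C(1)] that by (auto simp: S_def)
  ultimately obtain m where "m \<in> C" "(\<forall>y\<in>C. u y \<le> u m) \<or> (\<forall>y\<in>C. u m \<le> u y)"
    using bounded_open_interior_extremum[OF C(2) \<open>open C\<close> in_components_nonempty[OF C(1)]
        continuous_on_subset[OF cont]] by blast
  moreover obtain U where "(u has_derivative U) (at m)" "U \<noteq> (\<lambda>v. 0)"
    using grad \<open>C \<subseteq> ball a r\<close> \<open>m \<in> C\<close> by blast
  ultimately show False
    using differential_zero_maxmin[OF \<open>m \<in> C\<close> \<open>open C\<close>] by blast
qed

lemma level_set_homeomorphic_fibre:
  assumes hom: "homeomorphism A D h g" and DM: "D \<subseteq> M_RC"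
  shows "{z \<in> A. Re (fst (h z)) = x0} homeomorphic fibre D (complex_of_real x0)"
proof -
  define S where "S = {z \<in> A. Re (fst (h z)) = x0}"
  have hA: "h ` A = D" "\<And>z. z \<in> A \<Longrightarrow> g (h z) = z" and gD: "g ` D = A" "\<And>y. y \<in> D \<Longrightarrow> h (g y) = y"
    and cont: "continuous_on A h" "continuous_on D g"
    using hom by (auto simp: homeomorphism_def)
  have hS: "h z = (complex_of_real x0, snd (h z))" if "z \<in> S" for z
  proof -
    have "h z \<in> M_RC" using that hA(1) DM by (auto simp: S_def)
    then show ?thesis using M_RC_fst_eq[of "h z"] that by (simp add: S_def prod_eq_iff)
  qed
  have "homeomorphism S (fibre D (complex_of_real x0)) (\<lambda>z. snd (h z)) (\<lambda>w. g (complex_of_real x0, w))"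
  proof (rule homeomorphismI)
    show "continuous_on S (\<lambda>z. snd (h z))"
      by (intro continuous_intros continuous_on_subset[OF cont(1)]) (auto simp: S_def)
    show "continuous_on (fibre D (complex_of_real x0)) (\<lambda>w. g (complex_of_real x0, w))"
      by (rule continuous_on_compose2[OF cont(2)]) (auto intro!: continuous_intros simp: fibre_def)
    show "(\<lambda>z. snd (h z)) ` S \<subseteq> fibre D (complex_of_real x0)"
      using hS hA(1) by (force simp: S_def fibre_def)
    show "(\<lambda>w. g (complex_of_real x0, w)) ` fibre D (complex_of_real x0) \<subseteq> S"
      using gD by (force simp: S_def fibre_def)
    show "g (complex_of_real x0, snd (h z)) = z" if "z \<in> S" for z
      using hS[OF that] hA(2) that by (auto simp: S_def)
    show "snd (h (g (complex_of_real x0, w))) = w" if "w \<in> fibre D (complex_of_real x0)" for w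
      using gD(2) that by (simp add: fibre_def)
  qed
  then show ?thesis
    unfolding S_def homeomorphic_def by blast
qed

lemma connected_complement_fibre:
  assumes disc: "totally_real_disc TYPE('a::euclidean_space) D" and DM: "D \<subseteq> M_RC"
  shows "connected (- fibre D (complex_of_real x0))"
proof -
  obtain N h g where N: "totally_real_submanifold TYPE('a) N" and "D \<subseteq> N" "compact D"
    and hom: "homeomorphism (cball (0::complex) 1) D h g" "C2_on (cball 0 1) h" "C2_on D g"
    using disc unfolding totally_real_disc_def C2_diffeomorphic_def by blast
  have cont: "continuous_on (cball 0 1) h" and hD: "h ` cball 0 1 = D"
    using hom(1) by (auto simp: homeomorphism_def)
  define u where "u z = Re (fst (h z))" for z
  have "\<exists>U. (u has_derivative U) (at z) \<and> U \<noteq> (\<lambda>v. 0)" if z: "z \<in> ball 0 1" for z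
  proof -
    obtain H where H: "(h has_derivative H) (at z)" "inj H"
      using homeomorphism_C2_derivative_inj[OF hom, of z] z by (auto simp: interior_cball)
    have "(u has_derivative (\<lambda>v. Re (fst (H v)))) (at z)"
      unfolding u_def using H(1)
      by (rule bounded_linear.has_derivative[OF bounded_linear_compose[OF bounded_linear_Re bounded_linear_fst]])
    moreover have "h ` ball 0 1 \<subseteq> N \<inter> M_RC"
      using \<open>D \<subseteq> N\<close> DM hD ball_subset_cball by blast
    then have "(\<lambda>v. Re (fst (H v))) \<noteq> (\<lambda>v. 0)"
      by (rule M_RC_derivative_Re_fst_nonzero[OF N open_ball z
            continuous_on_subset[OF cont ball_subset_cball] _ H])
    ultimately show ?thesis by blast
  qed
  moreover have contu: "continuous_on (cball 0 1) u"
    unfolding u_def using cont by (intro continuous_intros)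
  ultimately have "connected (- {z \<in> cball 0 1. u z = x0})"
    by (intro connected_complement_level_set) auto
  moreover have "compact {z \<in> cball 0 1. u z = x0}"
  proof -
    have "closed {z \<in> cball 0 1. u z = x0}"
      by (rule continuous_closed_preimage_constant[OF contu closed_cball])
    moreover have "bounded {z \<in> cball 0 1. u z = x0}"
      by (rule bounded_subset[OF bounded_cball]) blast
    ultimately show ?thesis by (simp add: compact_eq_bounded_closed)
  qed
  moreover have "{z \<in> cball 0 1. u z = x0} homeomorphic fibre D (complex_of_real x0)"
    unfolding u_def by (rule level_set_homeomorphic_fibre[OF hom(1) DM])
  ultimately show ?thesis
    using homotopy_eqv_separation[OF homeomorphic_imp_homotopy_eqv] compact_fibre[OF \<open>compact D\<close>] by blast
qed

theorem corollary1p4: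
  fixes D :: "(complex \<times> complex) set"
  assumes "totally_real_disc TYPE('a::euclidean_space) D"
    and "D \<subseteq> M_RC"
  shows "polynomially_convex D"
proof -
  obtain h g where "compact D" and "homeomorphism (cball (0::complex) 1) D h g"
    using assms(1) unfolding totally_real_disc_def C2_diffeomorphic_def by blast
  then have "D \<noteq> {}"
    unfolding homeomorphism_def by (metis centre_in_cball empty_iff image_eqI zero_le_one)
  then show ?thesis
    unfolding polynomially_convex_def
    using poly_hull_eq_if_fibres_connected[OF \<open>compact D\<close> _ assms(2) connected_complement_fibre[OF assms]]
    by blast
qed

end
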